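(* Fix an iteration $k$, a current policy $\pi_k$, and a function $M_k:\mathcal Q\to(0,\infty)$. Define \[ L^{\mathrm{Nat}}_{\pi_k}(\pi(\cdot\mid q))=\mathbb E_{o\sim\pi(\cdot\mid q)}\Bigl[\frac{r^*(q,o)-\mathbb E_{o'\sim\pi_k(\cdot\mid q)}[r^*(q,o')]}{M_k(q)}\Bigr]. \] Then for every policy $\pi$, \[ \mathbb{E}_{q\sim\rho_{\mathcal Q}}\bigl[p_{\pi}(q)-p_{\pi_k}(q)\bigr] \ge \mathbb{E}_{q\sim\rho_{\mathcal Q}}\bigl[L^{\mathrm{Nat}}_{\pi_k}(\pi(\cdot\mid q))\bigr] -2\sqrt{\mathbb{E}_{q\sim\rho_{\mathcal Q}}\Bigl(\tfrac{1-M_k(q)}{M_k(q)}\Bigr)^2}\; \sqrt{\mathbb{E}_{q\sim\rho_{\mathcal Q}}\mathrm{TV}^2\bigl(\pi(\cdot\mid q)\,\|\,\pi_k(\cdot\mid q)\bigr)}. \]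
   Context: Setting: $\mathcal Q$ is a set of prompts with a probability distribution $\rho_{\mathcal Q}$; $\mathcal O$ is a countable set of responses; $r^*:\mathcal Q\times\mathcal O\to\{0,1\}$ is the true binary reward. A policy $\pi$ assigns to each $q$ a distribution $\pi(\cdot\mid q)$ on $\mathcal O$; $p_\pi(q)=\mathbb E_{o\sim\pi(\cdot\mid q)}[r^*(q,o)]$. $\mathrm{TV}(P,Q)=\sup_A|P(A)-Q(A)|$ is the total variation distance. *)

theory Defs
  imports "HOL-Probability.Probability"
begin

definition tv_dist :: "'o pmf \<Rightarrow> 'o pmf \<Rightarrow> real" where
  "tv_dist P Q = (SUP A. \<bar>measure_pmf.prob P A - measure_pmf.prob Q A\<bar>)"

definition succ_prob :: "('q \<Rightarrow> 'o \<Rightarrow> real) \<Rightarrow> ('q \<Rightarrow> 'o pmf) \<Rightarrow> 'q \<Rightarrow> real" where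
  "succ_prob r \<pi> q = measure_pmf.expectation (\<pi> q) (\<lambda>y. r q y)"

definition L_nat :: "('q \<Rightarrow> 'o \<Rightarrow> real) \<Rightarrow> ('q \<Rightarrow> 'o pmf) \<Rightarrow> ('q \<Rightarrow> real)
    \<Rightarrow> ('q \<Rightarrow> 'o pmf) \<Rightarrow> 'q \<Rightarrow> real" where
  "L_nat r \<pi>k M \<pi> q =
     measure_pmf.expectation (\<pi> q) (\<lambda>y. (r q y - measure_pmf.expectation (\<pi>k q) (\<lambda>y'. r q y')) / M q)"

end

(* Write d = p_pi - p_pik. For a binary reward, d q is the difference of the probabilities of the
   event {r q = 1} under the two policies, so |d| <= TV, while L^Nat = d / M. Hence pointwise
   d - L^Nat = -((1 - M) / M) d >= -|(1 - M) / M| TV, and Cauchy-Schwarz bounds the integral of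
   the error term. The argument gives the inequality even with the factor 2 replaced by 1. *)
theory Submission
  imports Defs
begin

lemma abs_prob_diff_le_1: "\<bar>measure_pmf.prob P A - measure_pmf.prob Q A\<bar> \<le> 1"
  using measure_pmf.prob_le_1[of P A] measure_pmf.prob_le_1[of Q A]
    measure_nonneg[of "measure_pmf P" A] measure_nonneg[of "measure_pmf Q" A]
  unfolding abs_le_iff by linarith

lemma abs_prob_diff_le_tv_dist:
  "\<bar>measure_pmf.prob P A - measure_pmf.prob Q A\<bar> \<le> tv_dist P Q"
proof -
  have "bdd_above (range (\<lambda>A. \<bar>measure_pmf.prob P A - measure_pmf.prob Q A\<bar>))"
    using abs_prob_diff_le_1 by (intro bdd_aboveI[where M = 1]) blast
  then show ?thesis
    unfolding tv_dist_def by (rule cSUP_upper[rotated]) simp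
qed

lemma tv_dist_le_1: "tv_dist P Q \<le> 1"
  unfolding tv_dist_def
  by (rule cSUP_least) (simp_all add: abs_prob_diff_le_1)

lemma tv_dist_nonneg: "0 \<le> tv_dist P Q"
  using abs_prob_diff_le_tv_dist abs_ge_zero order_trans by blast

lemma succ_prob_binary:
  assumes "\<And>y. r q y = 0 \<or> r q y = 1"
  shows "succ_prob r \<pi> q = measure_pmf.prob (\<pi> q) {y. r q y = 1}"
proof -
  define S where "S = {y. r q y = 1}"
  have "r q = indicator S"
    using assms by (auto simp: S_def indicator_def fun_eq_iff)
  then show ?thesis
    unfolding succ_prob_def S_def[symmetric] by simp
qed

lemma abs_succ_prob_diff_le_tv_dist:
  assumes "\<And>y. r q y = 0 \<or> r q y = 1"
  shows "\<bar>succ_prob r \<pi> q - succ_prob r \<pi>k q\<bar> \<le> tv_dist (\<pi> q) (\<pi>k q)"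
  using assms by (simp add: succ_prob_binary abs_prob_diff_le_tv_dist)

lemma integrable_measure_pmf_binary:
  fixes f :: "'a \<Rightarrow> real"
  assumes "\<And>x. f x = 0 \<or> f x = 1"
  shows "integrable (measure_pmf p) f"
proof (rule measure_pmf.integrable_const_bound[where B = 1])
  show "AE x in p. norm (f x) \<le> 1"
    using assms by (intro AE_I2) (metis norm_zero norm_one order_refl zero_le_one)
qed simp

lemma L_nat_eq_succ_prob_diff:
  assumes "integrable (measure_pmf (\<pi> q)) (r q)"
  shows "L_nat r \<pi>k M \<pi> q = (succ_prob r \<pi> q - succ_prob r \<pi>k q) / M q"
  using assms unfolding L_nat_def succ_prob_def by simp

lemma divide_minus_abs_le:
  fixes d t M :: real
  assumes "M > 0" and "\<bar>d\<bar> \<le> t"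
  shows "d / M - \<bar>(1 - M) / M * t\<bar> \<le> d"
proof -
  have "d / M - d = (1 - M) / M * d"
    using assms(1) by (simp add: field_simps)
  also have "\<dots> \<le> \<bar>(1 - M) / M\<bar> * \<bar>d\<bar>"
    by (metis abs_ge_self abs_mult)
  also have "\<dots> \<le> \<bar>(1 - M) / M\<bar> * t"
    using assms(2) by (rule mult_left_mono) simp
  also have "\<dots> = \<bar>(1 - M) / M * t\<bar>"
    using order_trans[OF abs_ge_zero assms(2)] by (simp add: abs_mult)
  finally show ?thesis
    by simp
qed

lemma L_nat_minus_le_succ_prob_diff:
  assumes "\<And>y. r q y = 0 \<or> r q y = 1" and "M q > 0"
  shows "L_nat r \<pi>k M \<pi> q - \<bar>(1 - M q) / M q * tv_dist (\<pi> q) (\<pi>k q)\<bar>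
           \<le> succ_prob r \<pi> q - succ_prob r \<pi>k q"
  using divide_minus_abs_le[OF assms(2) abs_succ_prob_diff_le_tv_dist[where r = r and q = q, OF assms(1)]]
  by (simp add: L_nat_eq_succ_prob_diff integrable_measure_pmf_binary assms(1))

lemma square_integrable_imp_borel_measurable_abs:
  fixes f :: "'a \<Rightarrow> real"
  assumes "integrable M (\<lambda>x. (f x)\<^sup>2)"
  shows "(\<lambda>x. \<bar>f x\<bar>) \<in> borel_measurable M"
  using measurable_compose[OF borel_measurable_integrable[OF assms] borel_measurable_sqrt] by simp

lemma square_integrable_imp_integrable_abs_mult:
  fixes f g :: "'a \<Rightarrow> real"
  assumes "integrable M (\<lambda>x. (f x)\<^sup>2)" "integrable M (\<lambda>x. (g x)\<^sup>2)"
  shows "integrable M (\<lambda>x. \<bar>f x * g x\<bar>)"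
proof (rule Bochner_Integration.integrable_bound)
  show "integrable M (\<lambda>x. (f x)\<^sup>2 + (g x)\<^sup>2)"
    using assms by (rule Bochner_Integration.integrable_add)
  show "(\<lambda>x. \<bar>f x * g x\<bar>) \<in> borel_measurable M"
    unfolding abs_mult
    using assms by (intro borel_measurable_times square_integrable_imp_borel_measurable_abs)
  show "AE x in M. norm \<bar>f x * g x\<bar> \<le> norm ((f x)\<^sup>2 + (g x)\<^sup>2)"
  proof (intro AE_I2)
    fix x
    have "2 * (\<bar>f x\<bar> * \<bar>g x\<bar>) \<le> (f x)\<^sup>2 + (g x)\<^sup>2"
      using sum_squares_bound[of "\<bar>f x\<bar>" "\<bar>g x\<bar>"] by (simp add: mult.assoc)
    moreover have "0 \<le> \<bar>f x\<bar> * \<bar>g x\<bar>"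
      by simp
    ultimately have "\<bar>f x\<bar> * \<bar>g x\<bar> \<le> (f x)\<^sup>2 + (g x)\<^sup>2"
      by linarith
    then show "norm \<bar>f x * g x\<bar> \<le> norm ((f x)\<^sup>2 + (g x)\<^sup>2)"
      by (simp add: abs_mult)
  qed
qed

lemma Cauchy_Schwarz_integral:
  fixes f g :: "'a \<Rightarrow> real"
  assumes f2: "integrable M (\<lambda>x. (f x)\<^sup>2)" and g2: "integrable M (\<lambda>x. (g x)\<^sup>2)"
  shows "(\<integral>x. \<bar>f x * g x\<bar> \<partial>M) \<le> sqrt (\<integral>x. (f x)\<^sup>2 \<partial>M) * sqrt (\<integral>x. (g x)\<^sup>2 \<partial>M)"
proof -
  note [measurable] = square_integrable_imp_borel_measurable_abs[OF f2]
    square_integrable_imp_borel_measurable_abs[OF g2]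
  have fg: "integrable M (\<lambda>x. \<bar>f x * g x\<bar>)"
    using f2 g2 by (rule square_integrable_imp_integrable_abs_mult)
  have "(\<integral>\<^sup>+x. ennreal \<bar>f x\<bar> * ennreal \<bar>g x\<bar> \<partial>M) = (\<integral>\<^sup>+x. ennreal \<bar>f x * g x\<bar> \<partial>M)"
    by (simp add: abs_mult ennreal_mult)
  also have "\<dots> = ennreal (\<integral>x. \<bar>f x * g x\<bar> \<partial>M)"
    using fg by (rule nn_integral_eq_integral) simp
  finally have "ennreal ((\<integral>x. \<bar>f x * g x\<bar> \<partial>M)\<^sup>2) = (\<integral>\<^sup>+x. ennreal \<bar>f x\<bar> * ennreal \<bar>g x\<bar> \<partial>M)\<^sup>2"
    by (simp add: ennreal_power)
  also have "\<dots> \<le> (\<integral>\<^sup>+x. ennreal \<bar>f x\<bar> ^ 2 \<partial>M) * (\<integral>\<^sup>+x. ennreal \<bar>g x\<bar> ^ 2 \<partial>M)"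
    by (rule Cauchy_Schwarz_nn_integral) measurable
  also have "\<dots> = ennreal ((\<integral>x. (f x)\<^sup>2 \<partial>M) * (\<integral>x. (g x)\<^sup>2 \<partial>M))"
    by (simp add: ennreal_power nn_integral_eq_integral[OF f2] nn_integral_eq_integral[OF g2]
        ennreal_mult')
  finally have "ennreal ((\<integral>x. \<bar>f x * g x\<bar> \<partial>M)\<^sup>2)
      \<le> ennreal ((\<integral>x. (f x)\<^sup>2 \<partial>M) * (\<integral>x. (g x)\<^sup>2 \<partial>M))" .
  moreover have "0 \<le> (\<integral>x. (f x)\<^sup>2 \<partial>M) * (\<integral>x. (g x)\<^sup>2 \<partial>M)"
    by simp
  ultimately have "(\<integral>x. \<bar>f x * g x\<bar> \<partial>M)\<^sup>2 \<le> (\<integral>x. (f x)\<^sup>2 \<partial>M) * (\<integral>x. (g x)\<^sup>2 \<partial>M)"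
    by simp
  then show ?thesis
    by (simp add: real_le_rsqrt flip: real_sqrt_mult)
qed

lemma integral_ge_minus_Cauchy_Schwarz:
  fixes L d a t :: "'a \<Rightarrow> real"
  assumes "integrable M L" "integrable M d"
    and "integrable M (\<lambda>x. (a x)\<^sup>2)" "integrable M (\<lambda>x. (t x)\<^sup>2)"
    and "\<And>x. x \<in> space M \<Longrightarrow> L x - \<bar>a x * t x\<bar> \<le> d x"
  shows "(\<integral>x. L x \<partial>M) - sqrt (\<integral>x. (a x)\<^sup>2 \<partial>M) * sqrt (\<integral>x. (t x)\<^sup>2 \<partial>M) \<le> (\<integral>x. d x \<partial>M)"
proof -
  have at: "integrable M (\<lambda>x. \<bar>a x * t x\<bar>)"
    using assms(3,4) by (rule square_integrable_imp_integrable_abs_mult)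
  have "(\<integral>x. L x \<partial>M) - (\<integral>x. \<bar>a x * t x\<bar> \<partial>M) = (\<integral>x. L x - \<bar>a x * t x\<bar> \<partial>M)"
    using assms(1) at by (rule Bochner_Integration.integral_diff[symmetric])
  also have "\<dots> \<le> (\<integral>x. d x \<partial>M)"
    using assms(1) at assms(2,5) by (intro integral_mono) auto
  finally show ?thesis
    using Cauchy_Schwarz_integral[OF assms(3,4)] by linarith
qed

theorem theorem5:
  fixes \<rho> :: "'q measure"
    and r :: "'q \<Rightarrow> 'o::countable \<Rightarrow> real"
    and \<pi>k \<pi> :: "'q \<Rightarrow> 'o pmf"
    and M :: "'q \<Rightarrow> real"
  assumes "prob_space \<rho>"
    and "\<And>q y. r q y = 0 \<or> r q y = 1"
    and "\<And>q. M q > 0"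
    and "(\<lambda>q. succ_prob r \<pi> q) \<in> borel_measurable \<rho>"
    and "(\<lambda>q. succ_prob r \<pi>k q) \<in> borel_measurable \<rho>"
    and "(\<lambda>q. tv_dist (\<pi> q) (\<pi>k q)) \<in> borel_measurable \<rho>"
    and "integrable \<rho> (\<lambda>q. L_nat r \<pi>k M \<pi> q)"
    and "integrable \<rho> (\<lambda>q. ((1 - M q) / M q)\<^sup>2)"
  shows "(\<integral>q. succ_prob r \<pi> q - succ_prob r \<pi>k q \<partial>\<rho>)
         \<ge> (\<integral>q. L_nat r \<pi>k M \<pi> q \<partial>\<rho>)
           - 2 * sqrt (\<integral>q. ((1 - M q) / M q)\<^sup>2 \<partial>\<rho>)
               * sqrt (\<integral>q. (tv_dist (\<pi> q) (\<pi>k q))\<^sup>2 \<partial>\<rho>)"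
proof -
  interpret prob_space \<rho>
    by (fact assms(1))
  define d where "d q = succ_prob r \<pi> q - succ_prob r \<pi>k q" for q
  define t where "t q = tv_dist (\<pi> q) (\<pi>k q)" for q
  have t_le_1: "\<bar>t q\<bar> \<le> 1" for q
    by (simp add: t_def tv_dist_nonneg tv_dist_le_1)
  have "\<bar>d q\<bar> \<le> 1" for q
    unfolding d_def using abs_succ_prob_diff_le_tv_dist[where r = r and q = q, OF assms(2)] tv_dist_le_1
    by (rule order_trans)
  moreover have "d \<in> borel_measurable \<rho>"
    unfolding d_def using assms(4,5) by (rule borel_measurable_diff)
  ultimately have d_integrable: "integrable \<rho> d"
    by (intro integrable_const_bound[where B = 1]) auto
  have t_square_integrable: "integrable \<rho> (\<lambda>q. (t q)\<^sup>2)"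
    using t_le_1 assms(6) by (intro integrable_const_bound[where B = 1]) (auto simp: t_def abs_square_le_1)
  have "(\<integral>q. L_nat r \<pi>k M \<pi> q \<partial>\<rho>) - sqrt (\<integral>q. ((1 - M q) / M q)\<^sup>2 \<partial>\<rho>) * sqrt (\<integral>q. (t q)\<^sup>2 \<partial>\<rho>)
      \<le> (\<integral>q. d q \<partial>\<rho>)"
    using integral_ge_minus_Cauchy_Schwarz[OF assms(7) d_integrable assms(8) t_square_integrable]
      L_nat_minus_le_succ_prob_diff[where r = r and M = M, OF assms(2,3)]
    by (simp add: d_def t_def)
  moreover have "0 \<le> sqrt (\<integral>q. ((1 - M q) / M q)\<^sup>2 \<partial>\<rho>) * sqrt (\<integral>q. (t q)\<^sup>2 \<partial>\<rho>)"
    by simp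
  ultimately show ?thesis
    unfolding d_def t_def by linarith
qed

end
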